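(* Let $\theta_0:\mathbb{R}^d\to\mathbb{R}^{d_\theta}$ be measurable and, for each $N\ge1$, let $\hat\theta_N:\mathbb{R}^d\to\mathbb{R}^{d_\theta}$ be a (possibly random) estimator built from data independent of $X^s$ and $X^t$. Suppose (i) $\|\hat\theta_N(X^s)\|_\infty\le\xi_N$ almost surely for every $N\ge1$; (ii) $\mathbb{E}\|\theta_0(X^s)\|_\infty^4<\infty$; (iii) $r_0(X^s)$ is sub-exponentially distributed. Then for $N\ge2$, $$\mathbb{E}\|\hat\theta_N(X^t)-\theta_0(X^t)\|_2^2=\mathbb{E}\big[\|\hat\theta_N(X^s)-\theta_0(X^s)\|_2^2\,r_0(X^s)\big]\le c_1\,\mathbb{E}\|\hat\theta_N(X^s)-\theta_0(X^s)\|_2^2\log N+\frac{c_2d_\theta(\xi_N^2+1)}{N},$$ with constants $c_1,c_2$ not depending on $N$.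
   Context: $X^s,X^t$ are random vectors in $\mathbb{R}^d$ with Lebesgue densities $p,q$, $\{q>0\}\subset\{p>0\}$, and density ratio $r_0=q/p$ (with $0/0=0$). A real random variable $V$ is sub-exponentially distributed if $\mathbb{E}\exp(\varsigma|V|)<\infty$ for some $\varsigma>0$. Expectations are over both the test point and the randomness of $\hat\theta_N$. *)

theory Defs
  imports "HOL-Probability.Probability"
begin

text \<open>Density ratio r0 = q / p (division by zero yields 0 in Isabelle, so 0/0 = 0).\<close>
definition density_ratio :: "('a \<Rightarrow> real) \<Rightarrow> ('a \<Rightarrow> real) \<Rightarrow> 'a \<Rightarrow> real" where
  "density_ratio p q x = q x / p x"

definition sub_exponential :: "'a measure \<Rightarrow> ('a \<Rightarrow> real) \<Rightarrow> bool" where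
  "sub_exponential P V \<longleftrightarrow> V \<in> borel_measurable P \<and>
     (\<exists>s>0. (\<integral>\<^sup>+x. ennreal (exp (s * \<bar>V x\<bar>)) \<partial>P) < \<infinity>)"

end

theory Submission
  imports Defs
begin

text \<open>Compare the density ratio \<open>r\<close> with the threshold \<open>(4/s) ln N\<close>, where \<open>s\<close> is the exponent
  of the sub-exponential moment. Below it the weight \<open>r\<close> costs the factor \<open>(4/s) ln N\<close>. Above it
  \<open>exp (s r / 4) \<ge> N\<close>, so \<open>r\<close> and \<open>N r\<^sup>2\<close> are at most multiples of \<open>exp (s r) / N\<close>; together with
  the a.s. bound \<open>\<xi>\<^sub>N\<close> on the estimator and Young's inequality for the \<open>\<theta>\<^sub>0\<close>-part of the error, this
  region contributes \<open>O (d\<^sub>\<theta> (\<xi>\<^sub>N\<^sup>2 + 1) / N)\<close>, the constant being given by the moments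
  \<open>E exp (s r\<^sub>0)\<close> and \<open>E \<parallel>\<theta>\<^sub>0\<parallel>\<^sub>\<infinity>\<^sup>4\<close>. The identity in the statement is the change of measure
  \<open>P\<^sub>t = r\<^sub>0 P\<^sub>s\<close> in the second factor of the product with the estimator's randomness.\<close>

lemma exp_tail_bounds:
  fixes s n r :: real
  assumes s: "s > 0" and n: "n > 0" and r: "r \<ge> 0" and tail: "n \<le> exp (s * r / 4)"
  shows "r \<le> 4 / s * exp (s * r) / n" and "n * r\<^sup>2 \<le> 16 / s\<^sup>2 * exp (s * r) / n"
proof -
  define X where "X = exp (s * r / 4)"
  have X1: "1 \<le> X" unfolding X_def using s r by simp
  have E: "exp (s * r) = X ^ 4"
    unfolding X_def by (simp flip: exp_of_nat_mult)
  have "s * r / 4 \<le> X"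
    unfolding X_def by (meson exp_ge_add_one_self le_add_same_cancel2 order_trans zero_le_one)
  then have rX: "r \<le> 4 / s * X" using s by (simp add: field_simps)
  have "n * X \<le> X ^ 4"
  proof -
    have "n * X \<le> X * X" using tail X1 unfolding X_def by (intro mult_right_mono) auto
    also have "\<dots> \<le> X ^ 4" using power_increasing[of 2 4 X] X1 by (simp add: power2_eq_square)
    finally show ?thesis .
  qed
  then have "4 / s * X \<le> 4 / s * exp (s * r) / n"
    using s n unfolding E by (simp add: field_simps)
  with rX show "r \<le> 4 / s * exp (s * r) / n" by linarith
  have "n * r\<^sup>2 \<le> n * (4 / s * X)\<^sup>2" using rX r n by (intro mult_left_mono power_mono) auto
  also have "\<dots> \<le> 16 / s\<^sup>2 * X ^ 4 / n"
  proof -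
    have "(n * X)\<^sup>2 \<le> (X * X)\<^sup>2"
      using tail X1 n unfolding X_def by (intro power_mono mult_right_mono) auto
    then show ?thesis
      using n s by (simp add: field_simps power_mult_distrib) (simp add: algebra_simps power_numeral_reduce)
  qed
  finally show "n * r\<^sup>2 \<le> 16 / s\<^sup>2 * exp (s * r) / n" by (simp add: E)
qed

lemma mult_le_ln_plus_exp:
  fixes f r a \<xi> k s n :: real
  assumes s: "s > 0" and n: "n \<ge> 1" and k: "k \<ge> 0" and r: "r \<ge> 0" and f: "0 \<le> f"
    and f_le: "f \<le> 2 * k * (\<xi>\<^sup>2 + a)"
  shows "f * r \<le> 4 / s * ln n * f + k * (\<xi>\<^sup>2 + 1) / n * ((8 / s + 16 / s\<^sup>2) * exp (s * r) + a\<^sup>2)"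
proof (cases "r \<le> 4 / s * ln n")
  case True
  then have "f * r \<le> 4 / s * ln n * f" using mult_left_mono[OF True f] by (simp add: mult.commute)
  moreover have "0 \<le> k * (\<xi>\<^sup>2 + 1) / n * ((8 / s + 16 / s\<^sup>2) * exp (s * r) + a\<^sup>2)"
    using k n s by (intro mult_nonneg_nonneg divide_nonneg_nonneg add_nonneg_nonneg) auto
  ultimately show ?thesis by linarith
next
  case False
  have n_pos: "0 < n" using n by simp
  define E where "E = exp (s * r)"
  have "ln n < s * r / 4" using False s by (simp add: field_simps)
  then have "ln n < ln (exp (s * r / 4))" by simp
  then have "n \<le> exp (s * r / 4)" using n by (subst (asm) ln_less_cancel_iff) auto
  note tail = exp_tail_bounds[OF s n_pos r this, folded E_def]
  have young: "a * r \<le> a\<^sup>2 / (2 * n) + 16 / s\<^sup>2 * E / n / 2"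
  proof -
    have "0 \<le> (a / sqrt n - sqrt n * r)\<^sup>2" by simp
    also have "\<dots> = a\<^sup>2 / n - 2 * a * r + n * r\<^sup>2"
      using n by (simp add: power2_eq_square field_simps)
    finally have "a * r \<le> a\<^sup>2 / (2 * n) + n * r\<^sup>2 / 2" by (simp add: field_simps)
    moreover have "n * r\<^sup>2 / 2 \<le> 16 / s\<^sup>2 * E / n / 2" using tail(2) by (rule divide_right_mono) simp
    ultimately show ?thesis by linarith
  qed
  have "f * r \<le> 2 * k * (\<xi>\<^sup>2 * r + a * r)"
    using mult_right_mono[OF f_le r] by (simp add: algebra_simps)
  also have "\<dots> \<le> 2 * k * (\<xi>\<^sup>2 * (4 / s * E / n) + (a\<^sup>2 / (2 * n) + 16 / s\<^sup>2 * E / n / 2))"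
    using tail(1) young k by (intro mult_left_mono add_mono) auto
  also have "\<dots> = k / n * (\<xi>\<^sup>2 * (8 / s * E) + 16 / s\<^sup>2 * E + a\<^sup>2)"
    using n by (simp add: field_simps)
  also have "\<dots> \<le> k / n * ((\<xi>\<^sup>2 + 1) * ((8 / s + 16 / s\<^sup>2) * E + a\<^sup>2))"
  proof -
    have "(\<xi>\<^sup>2 + 1) * ((8 / s + 16 / s\<^sup>2) * E + a\<^sup>2)
        = (\<xi>\<^sup>2 * (8 / s * E) + 16 / s\<^sup>2 * E + a\<^sup>2) + (8 / s * E + \<xi>\<^sup>2 * (16 / s\<^sup>2 * E) + \<xi>\<^sup>2 * a\<^sup>2)"
      by (simp add: algebra_simps add_divide_distrib)
    moreover have "0 \<le> 8 / s * E + \<xi>\<^sup>2 * (16 / s\<^sup>2 * E) + \<xi>\<^sup>2 * a\<^sup>2"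
      using s unfolding E_def by (intro add_nonneg_nonneg mult_nonneg_nonneg) auto
    ultimately show ?thesis using k n by (intro mult_left_mono) auto
  qed
  also have "\<dots> = k * (\<xi>\<^sup>2 + 1) / n * ((8 / s + 16 / s\<^sup>2) * E + a\<^sup>2)"
    by simp
  finally show ?thesis
    using s n f unfolding E_def by (smt (verit) ln_ge_zero mult_nonneg_nonneg divide_nonneg_nonneg)
qed

lemma power2_le_one_plus_power4: "(x::real)\<^sup>2 \<le> 1 + x ^ 4"
proof -
  have "0 \<le> (x\<^sup>2 - 1)\<^sup>2" by simp
  then show ?thesis
    by (simp add: power2_diff power_mult_distrib flip: power_mult) (smt (verit) zero_le_power2)
qed

lemma power2_norm_diff_le_infnorm:
  fixes a b :: "'a::euclidean_space"
  assumes "infnorm a \<le> \<xi>"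
  shows "(norm (a - b))\<^sup>2 \<le> 2 * real DIM('a) * (\<xi>\<^sup>2 + (infnorm b)\<^sup>2)"
proof -
  have norm_sq: "(norm x)\<^sup>2 \<le> real DIM('a) * (infnorm x)\<^sup>2" for x :: 'a
    using power_mono[OF norm_le_infnorm[of x] norm_ge_zero, of 2] by (simp add: power_mult_distrib)
  have "(infnorm a)\<^sup>2 \<le> \<xi>\<^sup>2" using assms infnorm_pos_le[of a] by (intro power_mono) auto
  then have a: "(norm a)\<^sup>2 \<le> real DIM('a) * \<xi>\<^sup>2"
    using norm_sq[of a] by (meson mult_left_mono of_nat_0_le_iff order_trans)
  have "(norm (a - b))\<^sup>2 \<le> (norm a + norm b)\<^sup>2"
    by (intro power_mono norm_triangle_ineq4) auto
  also have "\<dots> \<le> 2 * (norm a)\<^sup>2 + 2 * (norm b)\<^sup>2"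
    using sum_squares_bound[of "norm a" "norm b"] by (simp add: power2_sum)
  finally show ?thesis
    using a norm_sq[of b] by (simp add: algebra_simps)
qed

lemma density_ratio_nonneg:
  assumes "\<And>x. p x \<ge> 0" "\<And>x. q x \<ge> 0"
  shows "density_ratio p q x \<ge> 0"
  using assms by (simp add: density_ratio_def)

lemma borel_measurable_density_ratio [measurable]:
  assumes "p \<in> borel_measurable M" "q \<in> borel_measurable M"
  shows "density_ratio p q \<in> borel_measurable M"
  using assms unfolding density_ratio_def[abs_def] by measurable

lemma density_eq_density_density_ratio:
  assumes p: "p \<in> borel_measurable M" and q: "q \<in> borel_measurable M"
    and p_nonneg: "\<And>x. p x \<ge> 0" and q_nonneg: "\<And>x. q x \<ge> 0"
    and supp: "{x. q x > 0} \<subseteq> {x. p x > 0}"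
  shows "density M (\<lambda>x. ennreal (q x))
    = density (density M (\<lambda>x. ennreal (p x))) (\<lambda>x. ennreal (density_ratio p q x))"
proof -
  have q_eq: "q x = p x * density_ratio p q x" for x
  proof (cases "p x = 0")
    case True
    then have "\<not> q x > 0" using supp by auto
    with True q_nonneg[of x] show ?thesis by simp
  qed (simp add: density_ratio_def)
  show ?thesis
    by (subst density_density_eq) (use p q in \<open>auto simp: q_eq ennreal_mult p_nonneg
        density_ratio_nonneg[OF p_nonneg q_nonneg]\<close>)
qed

lemma sub_exponential_integrable_exp:
  assumes "sub_exponential P V"
  obtains s where "s > 0" "integrable P (\<lambda>x. exp (s * \<bar>V x\<bar>))"
proof -
  obtain s where s: "s > 0" and fin: "(\<integral>\<^sup>+x. ennreal (exp (s * \<bar>V x\<bar>)) \<partial>P) < \<infinity>"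
    and [measurable]: "V \<in> borel_measurable P"
    using assms unfolding sub_exponential_def by blast
  have "integrable P (\<lambda>x. exp (s * \<bar>V x\<bar>))"
    by (rule integrableI_bounded) (use fin in simp_all)
  with s show ?thesis by (rule that)
qed

lemma pair_measure_density_snd:
  assumes "g \<in> borel_measurable N" "sigma_finite_measure N" "sigma_finite_measure (density N g)"
  shows "M \<Otimes>\<^sub>M density N g = density (M \<Otimes>\<^sub>M N) (\<lambda>z. g (snd z))"
  using pair_measure_density[of "\<lambda>_. 1" M g N] assms by (simp add: density_1 case_prod_beta')

lemma integral_pair_density_snd:
  fixes f :: "'a \<times> 'b \<Rightarrow> real"
  assumes f: "f \<in> borel_measurable (M \<Otimes>\<^sub>M N)"
    and r: "r \<in> borel_measurable N" "\<And>y. r y \<ge> 0"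
    and sf: "sigma_finite_measure N" "sigma_finite_measure (density N (\<lambda>y. ennreal (r y)))"
  shows "(\<integral>z. f z \<partial>(M \<Otimes>\<^sub>M density N (\<lambda>y. ennreal (r y)))) = (\<integral>z. f z * r (snd z) \<partial>(M \<Otimes>\<^sub>M N))"
proof -
  have "(\<lambda>y. ennreal (r y)) \<in> borel_measurable N" using r by measurable
  then have "(\<integral>z. f z \<partial>(M \<Otimes>\<^sub>M density N (\<lambda>y. ennreal (r y))))
      = (\<integral>z. r (snd z) *\<^sub>R f z \<partial>(M \<Otimes>\<^sub>M N))"
    using r f sf by (simp add: pair_measure_density_snd integral_density)
  then show ?thesis by (simp add: mult.commute)
qed

lemma distr_snd_pair_prob_space:
  assumes "prob_space M" "sigma_finite_measure N"
  shows "distr (M \<Otimes>\<^sub>M N) N snd = N"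
proof (rule measure_eqI)
  interpret M: prob_space M by fact
  interpret N: sigma_finite_measure N by fact
  fix A assume "A \<in> sets (distr (M \<Otimes>\<^sub>M N) N snd)"
  then have A: "A \<in> sets N" by simp
  have "snd -` A \<inter> space (M \<Otimes>\<^sub>M N) = space M \<times> A"
    using sets.sets_into_space[OF A] by (auto simp: space_pair_measure)
  then show "emeasure (distr (M \<Otimes>\<^sub>M N) N snd) A = emeasure N A"
    using A by (simp add: emeasure_distr N.emeasure_pair_measure_Times M.emeasure_space_1)
qed simp

lemma integrable_snd_pair_prob_space:
  fixes h :: "'b \<Rightarrow> real"
  assumes "prob_space M" "sigma_finite_measure N" "integrable N h"
  shows "integrable (M \<Otimes>\<^sub>M N) (\<lambda>z. h (snd z))"
  using integrable_distr_eq[OF measurable_snd[of M N] borel_measurable_integrable[OF assms(3)]]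
    distr_snd_pair_prob_space[OF assms(1,2)] assms(3) by simp

lemma (in prob_space) integral_mult_le_ln_plus_exp:
  fixes f r a :: "'a \<Rightarrow> real" and \<xi> k s n :: real
  assumes f: "f \<in> borel_measurable M" and r_nonneg: "\<And>x. r x \<ge> 0"
    and s: "s > 0" and n: "n \<ge> 1" and k: "k \<ge> 0"
    and exp_int: "integrable M (\<lambda>x. exp (s * r x))" and a_int: "integrable M (\<lambda>x. a x ^ 4)"
    and f_bound: "AE x in M. 0 \<le> f x \<and> f x \<le> 2 * k * (\<xi>\<^sup>2 + (a x)\<^sup>2)"
  shows "(\<integral>x. f x * r x \<partial>M) \<le> 4 / s * (\<integral>x. f x \<partial>M) * ln n
    + k * (\<xi>\<^sup>2 + 1) / n * (\<integral>x. (8 / s + 16 / s\<^sup>2) * exp (s * r x) + a x ^ 4 \<partial>M)"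
proof -
  define G where "G x = (8 / s + 16 / s\<^sup>2) * exp (s * r x) + a x ^ 4" for x
  have G_int: "integrable M G"
    unfolding G_def using exp_int a_int by auto
  have "AE x in M. norm (f x) \<le> norm (2 * k * (\<xi>\<^sup>2 + (1 + a x ^ 4)))"
    using f_bound
  proof eventually_elim
    case (elim x)
    then show ?case
      using k power2_le_one_plus_power4[of "a x"] by (smt (verit) mult_left_mono real_norm_def)
  qed
  moreover have "integrable M (\<lambda>x. 2 * k * (\<xi>\<^sup>2 + (1 + a x ^ 4)))" using a_int by auto
  ultimately have f_int: "integrable M f"
    using f Bochner_Integration.integrable_bound by blast
  have "AE x in M. f x * r x \<le> 4 / s * ln n * f x + k * (\<xi>\<^sup>2 + 1) / n * G x"
    using f_bound
  proof eventually_elim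
    case (elim x)
    then show ?case
      using mult_le_ln_plus_exp[OF s n k r_nonneg, of "f x" \<xi> "(a x)\<^sup>2"]
      by (simp add: G_def flip: power_mult)
  qed
  moreover have "AE x in M. 0 \<le> 4 / s * ln n * f x + k * (\<xi>\<^sup>2 + 1) / n * G x"
    using f_bound
  proof eventually_elim
    case (elim x)
    then show ?case
      using s n k unfolding G_def by (intro add_nonneg_nonneg mult_nonneg_nonneg divide_nonneg_nonneg) auto
  qed
  ultimately have "(\<integral>x. f x * r x \<partial>M) \<le> (\<integral>x. 4 / s * ln n * f x + k * (\<xi>\<^sup>2 + 1) / n * G x \<partial>M)"
    using f_int G_int by (intro integral_mono_AE') auto
  also have "\<dots> = 4 / s * (\<integral>x. f x \<partial>M) * ln n + k * (\<xi>\<^sup>2 + 1) / n * (\<integral>x. G x \<partial>M)"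
    using f_int G_int by (simp add: mult_ac)
  finally show ?thesis unfolding G_def .
qed

theorem corollary4p2:
  fixes p q :: "real^'d \<Rightarrow> real"
    and \<theta>0 :: "real^'d \<Rightarrow> real^'k"
    and M :: "'w measure"
    and \<theta>hat :: "nat \<Rightarrow> 'w \<Rightarrow> real^'d \<Rightarrow> real^'k"
    and \<xi> :: "nat \<Rightarrow> real"
  defines "Ps \<equiv> density lborel (\<lambda>x. ennreal (p x))"
    and "Pt \<equiv> density lborel (\<lambda>x. ennreal (q x))"
    and "r0 \<equiv> density_ratio p q"
  assumes p_meas: "p \<in> borel_measurable lborel"
    and q_meas: "q \<in> borel_measurable lborel"
    and p_nonneg: "\<And>x. p x \<ge> 0"
    and q_nonneg: "\<And>x. q x \<ge> 0"
    and Ps_prob: "prob_space Ps"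
    and Pt_prob: "prob_space Pt"
    and supp: "{x. q x > 0} \<subseteq> {x. p x > 0}"
    and M_prob: "prob_space M"
    and \<theta>0_meas: "\<theta>0 \<in> borel_measurable lborel"
    and \<theta>hat_meas: "\<And>N. (\<lambda>(\<omega>, x). \<theta>hat N \<omega> x) \<in> borel_measurable (M \<Otimes>\<^sub>M lborel)"
    and bound: "\<And>N. N \<ge> 1 \<Longrightarrow> AE z in M \<Otimes>\<^sub>M Ps. infnorm (\<theta>hat N (fst z) (snd z)) \<le> \<xi> N"
    and moment4: "integrable Ps (\<lambda>x. infnorm (\<theta>0 x) ^ 4)"
    and subexp: "sub_exponential Ps r0"
  shows "\<exists>c1 c2 :: real. \<forall>N::nat. N \<ge> 2 \<longrightarrow>
      (\<integral>z. (norm (\<theta>hat N (fst z) (snd z) - \<theta>0 (snd z)))\<^sup>2 \<partial>(M \<Otimes>\<^sub>M Pt))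
        = (\<integral>z. (norm (\<theta>hat N (fst z) (snd z) - \<theta>0 (snd z)))\<^sup>2 * r0 (snd z) \<partial>(M \<Otimes>\<^sub>M Ps))
    \<and> (\<integral>z. (norm (\<theta>hat N (fst z) (snd z) - \<theta>0 (snd z)))\<^sup>2 * r0 (snd z) \<partial>(M \<Otimes>\<^sub>M Ps))
        \<le> c1 * (\<integral>z. (norm (\<theta>hat N (fst z) (snd z) - \<theta>0 (snd z)))\<^sup>2 \<partial>(M \<Otimes>\<^sub>M Ps)) * ln (real N)
          + c2 * real CARD('k) * ((\<xi> N)\<^sup>2 + 1) / real N"
proof -
  interpret Ps: prob_space Ps by (rule Ps_prob)
  let ?P = "M \<Otimes>\<^sub>M Ps"
  have r0_nonneg: "r0 x \<ge> 0" for x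
    unfolding r0_def using p_nonneg q_nonneg by (rule density_ratio_nonneg)
  have r0_meas [measurable]: "r0 \<in> borel_measurable Ps"
    unfolding r0_def Ps_def using p_meas q_meas by simp
  have Pt_eq: "Pt = density Ps (\<lambda>x. ennreal (r0 x))"
    unfolding Pt_def Ps_def r0_def using p_meas q_meas p_nonneg q_nonneg supp
    by (rule density_eq_density_density_ratio)
  obtain s where s: "s > 0" and exp_int: "integrable Ps (\<lambda>x. exp (s * \<bar>r0 x\<bar>))"
    using subexp by (rule sub_exponential_integrable_exp)
  define F where "F N z = (norm (\<theta>hat N (fst z) (snd z) - \<theta>0 (snd z)))\<^sup>2" for N z
  have F_meas: "F N \<in> borel_measurable ?P" for N
  proof -
    have "sets ?P = sets (M \<Otimes>\<^sub>M lborel)" unfolding Ps_def by (rule sets_pair_measure_cong) auto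
    moreover note \<theta>hat_meas[of N, unfolded case_prod_beta', measurable] \<theta>0_meas[measurable]
    ultimately show ?thesis unfolding F_def by (subst measurable_cong_sets) (auto, measurable)
  qed
  have change: "(\<integral>z. F N z \<partial>(M \<Otimes>\<^sub>M Pt)) = (\<integral>z. F N z * r0 (snd z) \<partial>?P)" for N
    unfolding Pt_eq using Pt_prob[unfolded Pt_eq]
    by (intro integral_pair_density_snd F_meas r0_meas r0_nonneg prob_space_imp_sigma_finite Ps_prob)
  define c2 where
    "c2 = (\<integral>z. (8 / s + 16 / s\<^sup>2) * exp (s * r0 (snd z)) + infnorm (\<theta>0 (snd z)) ^ 4 \<partial>?P)"
  have "(\<integral>z. F N z * r0 (snd z) \<partial>?P) \<le> 4 / s * (\<integral>z. F N z \<partial>?P) * ln N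
      + real CARD('k) * ((\<xi> N)\<^sup>2 + 1) / N * c2" if "N \<ge> 2" for N
    unfolding c2_def
  proof (rule prob_space.integral_mult_le_ln_plus_exp[OF prob_space_pair[OF M_prob Ps_prob] F_meas])
    show "AE z in ?P. 0 \<le> F N z \<and>
        F N z \<le> 2 * real CARD('k) * ((\<xi> N)\<^sup>2 + (infnorm (\<theta>0 (snd z)))\<^sup>2)"
      using that by (intro eventually_mono[OF bound[of N]])
        (auto simp: F_def dest: power2_norm_diff_le_infnorm[where b = "\<theta>0 _"])
    show "integrable ?P (\<lambda>z. exp (s * r0 (snd z)))" "integrable ?P (\<lambda>z. infnorm (\<theta>0 (snd z)) ^ 4)"
      using exp_int moment4 r0_nonneg
      by (auto intro!: integrable_snd_pair_prob_space M_prob prob_space_imp_sigma_finite Ps_prob)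
  qed (use s that r0_nonneg in auto)
  with change show ?thesis
    by (intro exI[of _ "4 / s"] exI[of _ c2]) (simp add: F_def mult_ac)
qed

end
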